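(* In the parallel-links routing game with homogeneous costs described in the context, let $\alpha^i>0$ ($i\in\mathcal N$) be weights with $\sum_i\alpha^i=1$, and consider the weighted social cost $J^{\alpha}_{sys}(\mathbf f)=\sum_i\alpha^i\sum_lf^i_lT_l(f_l)$. Let $PoS$ be the ratio of the weighted social cost of the NBS, $\sum_i\alpha^i\tilde g^i$, to the minimum of $J^\alpha_{sys}$ over feasible profiles, and let $\overline{PoS}=(\sum_i\tilde g^i)/J^*_{sys}$ be the Price of Selfishness for the unweighted social cost. Then $$\frac{\min_i\alpha^i}{\max_i\alpha^i}\,\overline{PoS}\ \le\ PoS\ \le\ \frac{\max_i\alpha^i}{\min_i\alpha^i}\,\overline{PoS}.$$
   Context: Parallel-links routing game: users $\mathcal N=\{1,\dots,N\}$ share parallel links $\mathcal L=\{1,\dots,L\}$ from a common source to a common destination; link $l$ has capacity $c_l$. User $i$ has demand $r^i>0$, $R=\sum_ir^i<\sum_lc_l$. A routing strategy of user $i$ is $\mathbf f^i=(f^i_l)_l$ with $f^i_l\ge0$, $\sum_lf^i_l=r^i$; feasible profiles form $\mathbf F$; $f_l=\sum_if^i_l$. Homogeneous costs: $J^i(\mathbf f)=\sum_lf^i_lT_l(f_l)$, each $T_l:[0,\infty)\to[0,\infty)$ strictly increasing, convex, continuously differentiable, with $T_l(f_l)=T(c_l-f_l)$ for $f_l<c_l$ and $T_l(f_l)=\infty$ for $f_l\ge c_l$, for a single link-independent function $T$ with $T(c_l-f_l)$ strictly increasing in $f_l$. NEP: the unique feasible $\hat{\mathbf f}$ in which each user's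 strategy minimizes its cost given the others'; $\hat J^i=J^i(\hat{\mathbf f})$. Unweighted social cost $J_{sys}=\sum_iJ^i=\sum_lf_lT_l(f_l)$, minimum $J^*_{sys}$. Bargaining: $\mathcal G$ is the set of all vectors $\sum_{m=1}^Mp_m(J^1(\mathbf f(m)),\dots,J^N(\mathbf f(m)))$ with $M$ finite, $p_m>0$, $\sum p_m=1$, $\mathbf f(m)\in\mathbf F$; the NBS is the unique $\tilde{\mathbf g}$ maximizing $\prod_i(\hat J^i-g^i)$ over $\mathbf g\in\mathcal G$ with $g^i\le\hat J^i$ for all $i$. *)

theory Defs
  imports "HOL-Analysis.Analysis"
begin

text \<open>Users are indexed by a finite type 'u, links by a finite type 'l.
  A profile is f :: 'u => 'l => real, where f i l is the flow of user i on link l.\<close>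

definition link_flow :: "('u::finite \<Rightarrow> 'l::finite \<Rightarrow> real) \<Rightarrow> 'l \<Rightarrow> real" where
  "link_flow f l = (\<Sum>i\<in>UNIV. f i l)"

text \<open>Feasible profiles of finite cost (all link flows below capacity).\<close>
definition feasible :: "('l::finite \<Rightarrow> real) \<Rightarrow> ('u::finite \<Rightarrow> real) \<Rightarrow> ('u \<Rightarrow> 'l \<Rightarrow> real) set" where
  "feasible c r = {f. (\<forall>i l. 0 \<le> f i l) \<and> (\<forall>i. (\<Sum>l\<in>UNIV. f i l) = r i)
                      \<and> (\<forall>l. link_flow f l < c l)}"

definition link_cost :: "(real \<Rightarrow> real) \<Rightarrow> ('l \<Rightarrow> real) \<Rightarrow> 'l \<Rightarrow> real \<Rightarrow> real" where
  "link_cost T c l x = T (c l - x)"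

definition user_cost :: "(real \<Rightarrow> real) \<Rightarrow> ('l::finite \<Rightarrow> real) \<Rightarrow> ('u::finite \<Rightarrow> 'l \<Rightarrow> real) \<Rightarrow> 'u \<Rightarrow> real" where
  "user_cost T c f i = (\<Sum>l\<in>UNIV. f i l * link_cost T c l (link_flow f l))"

definition sys_cost :: "(real \<Rightarrow> real) \<Rightarrow> ('l::finite \<Rightarrow> real) \<Rightarrow> ('u::finite \<Rightarrow> 'l \<Rightarrow> real) \<Rightarrow> real" where
  "sys_cost T c f = (\<Sum>i\<in>UNIV. user_cost T c f i)"

definition weighted_sys_cost :: "('u::finite \<Rightarrow> real) \<Rightarrow> (real \<Rightarrow> real) \<Rightarrow> ('l::finite \<Rightarrow> real) \<Rightarrow> ('u \<Rightarrow> 'l \<Rightarrow> real) \<Rightarrow> real" where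
  "weighted_sys_cost \<alpha> T c f = (\<Sum>i\<in>UNIV. \<alpha> i * user_cost T c f i)"

definition is_NEP :: "(real \<Rightarrow> real) \<Rightarrow> ('l::finite \<Rightarrow> real) \<Rightarrow> ('u::finite \<Rightarrow> real) \<Rightarrow> ('u \<Rightarrow> 'l \<Rightarrow> real) \<Rightarrow> bool" where
  "is_NEP T c r f \<longleftrightarrow> f \<in> feasible c r \<and>
     (\<forall>i g. g \<in> feasible c r \<longrightarrow> (\<forall>j. j \<noteq> i \<longrightarrow> g j = f j) \<longrightarrow> user_cost T c f i \<le> user_cost T c g i)"

definition bargain_set :: "(real \<Rightarrow> real) \<Rightarrow> ('l::finite \<Rightarrow> real) \<Rightarrow> ('u::finite \<Rightarrow> real) \<Rightarrow> ('u \<Rightarrow> real) set" where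
  "bargain_set T c r = {g. \<exists>(M::nat) p fs. 0 < M \<and> (\<forall>m<M. 0 < p m \<and> fs m \<in> feasible c r)
       \<and> (\<Sum>m<M. p m) = 1 \<and> g = (\<lambda>i. \<Sum>m<M. p m * user_cost T c (fs m) i)}"

definition is_NBS :: "(real \<Rightarrow> real) \<Rightarrow> ('l::finite \<Rightarrow> real) \<Rightarrow> ('u::finite \<Rightarrow> real) \<Rightarrow> ('u \<Rightarrow> real) \<Rightarrow> ('u \<Rightarrow> real) \<Rightarrow> bool" where
  "is_NBS T c r Jhat g \<longleftrightarrow> g \<in> bargain_set T c r \<and> (\<forall>i. g i \<le> Jhat i) \<and>
     (\<forall>h \<in> bargain_set T c r. (\<forall>i. h i \<le> Jhat i) \<longrightarrow>
        (\<Prod>i\<in>UNIV. Jhat i - h i) \<le> (\<Prod>i\<in>UNIV. Jhat i - g i))"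

end

theory Submission
  imports Defs
begin

text \<open>Only nonnegativity of the costs matters: with \<open>m = min \<alpha>\<close> and \<open>M = max \<alpha>\<close>,
  both the weighted social cost of any profile and the weighted cost of the NBS lie between
  \<open>m\<close> and \<open>M\<close> times their unweighted counterparts, so the two ratios differ by at most
  the factor \<open>M / m\<close> in either direction.\<close>

lemma sum_weighted_bounds:
  fixes x a :: "'i \<Rightarrow> real"
  assumes "\<And>i. i \<in> I \<Longrightarrow> 0 \<le> x i" and "\<And>i. i \<in> I \<Longrightarrow> m \<le> a i \<and> a i \<le> M"
  shows "m * (\<Sum>i\<in>I. x i) \<le> (\<Sum>i\<in>I. a i * x i) \<and> (\<Sum>i\<in>I. a i * x i) \<le> M * (\<Sum>i\<in>I. x i)"
  unfolding sum_distrib_left using assms by (auto intro!: sum_mono mult_right_mono)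

lemma cINF_scaled_lower_bound:
  fixes g h :: "'a \<Rightarrow> real"
  assumes "A \<noteq> {}" and "0 < k" and "\<forall>x\<in>A. 0 \<le> g x" and "\<forall>x\<in>A. k * g x \<le> h x"
  shows "k * (INF x\<in>A. g x) \<le> (INF x\<in>A. h x)"
proof (rule cINF_greatest[OF assms(1)])
  fix x assume x: "x \<in> A"
  have "(INF x\<in>A. g x) \<le> g x"
    using assms(3) x by (intro cINF_lower bdd_belowI2[where m = 0]) auto
  then show "k * (INF x\<in>A. g x) \<le> h x"
    using assms(2,4) x by (meson mult_left_mono less_imp_le order_trans)
qed

lemma cINF_scaled_upper_bound:
  fixes g h :: "'a \<Rightarrow> real"
  assumes "A \<noteq> {}" and "0 < k" and "\<forall>x\<in>A. 0 \<le> h x" and "\<forall>x\<in>A. h x \<le> k * g x"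
  shows "(INF x\<in>A. h x) \<le> k * (INF x\<in>A. g x)"
proof -
  have "(INF x\<in>A. h x) / k \<le> (INF x\<in>A. g x)"
  proof (rule cINF_greatest[OF assms(1)])
    fix x assume x: "x \<in> A"
    have "(INF x\<in>A. h x) \<le> h x"
      using assms(3) x by (intro cINF_lower bdd_belowI2[where m = 0]) auto
    also have "h x \<le> k * g x" using assms(4) x by blast
    finally show "(INF x\<in>A. h x) / k \<le> g x"
      using assms(2) by (simp add: pos_divide_le_eq mult.commute)
  qed
  then show ?thesis using assms(2) by (simp add: pos_divide_le_eq mult.commute)
qed

text \<open>If the unweighted minimum \<open>S\<close> is \<open>0\<close>, so is \<open>W\<close>, and both ratios are \<open>0\<close>
  by the convention \<open>x / 0 = 0\<close>.\<close>

lemma ratio_bounds_of_scaled_bounds: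
  fixes m M A B W S :: real
  assumes "0 < m" and "m \<le> M" and "0 \<le> B" and "0 \<le> S"
    and "m * B \<le> A" and "A \<le> M * B" and "m * S \<le> W" and "W \<le> M * S"
  shows "(m / M) * (B / S) \<le> A / W \<and> A / W \<le> (M / m) * (B / S)"
proof (cases "S = 0")
  case True
  then show ?thesis using assms by simp
next
  case False
  then have S: "0 < S" using assms(4) by simp
  have W: "0 < W" using assms(1,7) S by (meson mult_pos_pos less_le_trans)
  have A: "0 \<le> A" using assms(1,3,5) by (meson mult_nonneg_nonneg less_imp_le order_trans)
  have M: "0 < M" using assms(1,2) by simp
  have "(m / M) * (B / S) = (m * B) / (M * S)" by simp
  also have "\<dots> \<le> A / (M * S)" using assms(5) M S by (simp add: divide_right_mono)
  also have "\<dots> \<le> A / W" using assms(8) W A by (intro divide_left_mono) auto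
  finally have lower: "(m / M) * (B / S) \<le> A / W" .
  have "A / W \<le> A / (m * S)" using assms(1,7) W A S by (intro divide_left_mono) auto
  also have "\<dots> \<le> (M * B) / (m * S)" using assms(1,6) S by (simp add: divide_right_mono)
  also have "\<dots> = (M / m) * (B / S)" by simp
  finally show ?thesis using lower by simp
qed

lemma user_cost_nonneg:
  assumes "\<forall>l. \<forall>x\<in>{0..<c l}. 0 \<le> T (c l - x)" and "f \<in> feasible c r"
  shows "0 \<le> user_cost T c f i"
  unfolding user_cost_def
proof (rule sum_nonneg)
  fix l
  have "0 \<le> link_flow f l" and "link_flow f l < c l"
    using assms(2) unfolding feasible_def link_flow_def by (auto intro: sum_nonneg)
  then have "0 \<le> link_cost T c l (link_flow f l)"
    using assms(1) unfolding link_cost_def by auto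
  then show "0 \<le> f i l * link_cost T c l (link_flow f l)"
    using assms(2) unfolding feasible_def by simp
qed

lemma bargain_set_nonneg:
  assumes "\<forall>l. \<forall>x\<in>{0..<c l}. 0 \<le> T (c l - x)" and "g \<in> bargain_set T c r"
  shows "0 \<le> g i"
proof -
  obtain K :: nat and p fs where mix: "\<forall>k<K. 0 < p k \<and> fs k \<in> feasible c r"
    and g: "g = (\<lambda>i. \<Sum>k<K. p k * user_cost T c (fs k) i)"
    using assms(2) unfolding bargain_set_def by blast
  show ?thesis
    unfolding g using mix user_cost_nonneg[OF assms(1)]
    by (intro sum_nonneg mult_nonneg_nonneg) (auto intro: less_imp_le)
qed

theorem proposition3p2:
  fixes c :: "'l::finite \<Rightarrow> real" and r :: "'u::finite \<Rightarrow> real"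
    and T :: "real \<Rightarrow> real" and \<alpha> :: "'u \<Rightarrow> real"
    and fhat :: "'u \<Rightarrow> 'l \<Rightarrow> real" and gt :: "'u \<Rightarrow> real"
  assumes r_pos: "\<forall>i. 0 < r i"
    and cap: "(\<Sum>i\<in>UNIV. r i) < (\<Sum>l\<in>UNIV. c l)"
    and T_nonneg: "\<forall>l. \<forall>x\<in>{0..<c l}. 0 \<le> T (c l - x)"
    and T_incr: "\<forall>l. strict_mono_on {0..<c l} (\<lambda>x. T (c l - x))"
    and T_convex: "\<forall>l. convex_on {0..<c l} (\<lambda>x. T (c l - x))"
    and T_C1: "\<forall>l. \<exists>T'. continuous_on {0..<c l} T' \<and>
                 (\<forall>x\<in>{0..<c l}. ((\<lambda>y. T (c l - y)) has_real_derivative T' x) (at x within {0..<c l}))"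
    and alpha_pos: "\<forall>i. 0 < \<alpha> i"
    and alpha_sum: "(\<Sum>i\<in>UNIV. \<alpha> i) = 1"
    and NEP: "is_NEP T c r fhat"
    and NBS: "is_NBS T c r (user_cost T c fhat) gt"
  defines "PoS \<equiv> (\<Sum>i\<in>UNIV. \<alpha> i * gt i) / (INF f\<in>feasible c r. weighted_sys_cost \<alpha> T c f)"
    and "PoS_bar \<equiv> (\<Sum>i\<in>UNIV. gt i) / (INF f\<in>feasible c r. sys_cost T c f)"
  shows "(Min (range \<alpha>) / Max (range \<alpha>)) * PoS_bar \<le> PoS
         \<and> PoS \<le> (Max (range \<alpha>) / Min (range \<alpha>)) * PoS_bar"
proof -
  define m where "m = Min (range \<alpha>)"
  define M where "M = Max (range \<alpha>)"
  have alpha_range: "m \<le> \<alpha> i \<and> \<alpha> i \<le> M" for i unfolding m_def M_def by simp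
  have m_pos: "0 < m" unfolding m_def using alpha_pos by (subst Min_gr_iff) auto
  have nonempty: "feasible c r \<noteq> {}" using NEP unfolding is_NEP_def by auto
  have cost_nonneg: "\<forall>f\<in>feasible c r. 0 \<le> user_cost T c f i" for i
    using user_cost_nonneg[OF T_nonneg] by blast
  have sys_bounds: "\<forall>f\<in>feasible c r. m * sys_cost T c f \<le> weighted_sys_cost \<alpha> T c f
                      \<and> weighted_sys_cost \<alpha> T c f \<le> M * sys_cost T c f"
    unfolding sys_cost_def weighted_sys_cost_def
    using sum_weighted_bounds[of UNIV "user_cost T c _" m \<alpha> M] cost_nonneg alpha_range by blast
  have sys_nonneg: "\<forall>f\<in>feasible c r. 0 \<le> sys_cost T c f"
    unfolding sys_cost_def using cost_nonneg by (auto intro: sum_nonneg)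
  have gt_nonneg: "0 \<le> gt i" for i
    using NBS bargain_set_nonneg[OF T_nonneg] unfolding is_NBS_def by blast
  have m_le_M: "m \<le> M" using alpha_range by (meson order_trans)
  have M_pos: "0 < M" using m_pos m_le_M by simp
  have weighted_nonneg: "\<forall>f\<in>feasible c r. 0 \<le> weighted_sys_cost \<alpha> T c f"
    using sys_bounds sys_nonneg m_pos by (meson mult_nonneg_nonneg less_imp_le order_trans)
  have min_lower: "m * (INF f\<in>feasible c r. sys_cost T c f)
                     \<le> (INF f\<in>feasible c r. weighted_sys_cost \<alpha> T c f)"
    using cINF_scaled_lower_bound[OF nonempty m_pos sys_nonneg] sys_bounds by blast
  have min_upper: "(INF f\<in>feasible c r. weighted_sys_cost \<alpha> T c f)
                     \<le> M * (INF f\<in>feasible c r. sys_cost T c f)"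
    using cINF_scaled_upper_bound[OF nonempty M_pos weighted_nonneg] sys_bounds by blast
  have min_nonneg: "0 \<le> (INF f\<in>feasible c r. sys_cost T c f)"
    using nonempty sys_nonneg by (auto intro: cINF_greatest)
  show ?thesis
    unfolding PoS_def PoS_bar_def m_def[symmetric] M_def[symmetric]
    using sum_weighted_bounds[of UNIV gt, OF gt_nonneg alpha_range]
    by (intro ratio_bounds_of_scaled_bounds[OF m_pos m_le_M _ min_nonneg _ _ min_lower min_upper])
       (auto intro: sum_nonneg gt_nonneg)
qed

end
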